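(* Let $F$ be an arbitrary field and let $f\in F\langle X\rangle$ be a nonzero multilinear polynomial of degree $d$. Let $n\ge 2$ be such that $d<2n$. If $c\in M_n(F)$ satisfies $$f(c,a_2,\ldots,a_d)=f(a_1,c,a_3,\ldots,a_d)=\cdots=f(a_1,\ldots,a_{d-1},c)=0$$ for all $a_1,\ldots,a_d\in M_n(F)$, then $c\in F\cdot 1$.
   Context: $F\langle X\rangle$ is the free algebra over $F$ in countably many noncommuting indeterminates $x_1,x_2,\ldots$. A polynomial $f=f(x_1,\ldots,x_d)$ is multilinear of degree $d$ if $f=\sum_{\sigma\in S_d}\lambda_\sigma x_{\sigma(1)}\cdots x_{\sigma(d)}$ with $\lambda_\sigma\in F$. $1$ denotes the identity matrix. *)

theory Defs
  imports "HOL-Analysis.Analysis"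
begin

text \<open>A multilinear polynomial of degree d in x_0,...,x_{d-1} is given by its
coefficient function lam on permutations of {0..<d}:
f = sum over sigma of lam sigma * x_{sigma 0} ... x_{sigma (d-1)}.\<close>

definition ordered_prod :: "nat \<Rightarrow> (nat \<Rightarrow> nat) \<Rightarrow> (nat \<Rightarrow> 'a::field^'n^'n) \<Rightarrow> 'a^'n^'n" where
  "ordered_prod d \<sigma> a = foldr (\<lambda>i acc. a (\<sigma> i) ** acc) [0..<d] (mat 1)"

definition ml_eval :: "nat \<Rightarrow> ((nat \<Rightarrow> nat) \<Rightarrow> 'a::field) \<Rightarrow> (nat \<Rightarrow> 'a^'n^'n) \<Rightarrow> 'a^'n^'n" where
  "ml_eval d lam a = (\<Sum>\<sigma>\<in>{\<sigma>. \<sigma> permutes {0..<d}}. mat (lam \<sigma>) ** ordered_prod d \<sigma> a)"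

definition ml_nonzero :: "nat \<Rightarrow> ((nat \<Rightarrow> nat) \<Rightarrow> 'a::field) \<Rightarrow> bool" where
  "ml_nonzero d lam \<longleftrightarrow> (\<exists>\<sigma>. \<sigma> permutes {0..<d} \<and> lam \<sigma> \<noteq> 0)"

end

theory Submission
  imports Defs
begin

text \<open>
  Off-diagonal entries.  Fix a monomial sigma with lam sigma nonzero and an enumeration g of the
  indices with g 0 = p, g 1 = q.  Substitute for the variable at position k of sigma the matrix
  unit E(g (k div 2), g ((k+1) div 2)); these "staircase" units multiply to E(g 0, g (d div 2)),
  which makes sense because d < 2n.  Put c at position 1 instead.  Expanding c in matrix units,
  a product of matrix units is nonzero only along a chain of matching indices, and a purely
  combinatorial rigidity argument shows that the only chain reaching the entry
  (g 0, g (d div 2)) comes from the monomial sigma itself with c replaced by E(p, q).  Hence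
  that entry of f equals lam sigma * c_pq, so c_pq = 0.

  Diagonal entries.  The vanishing condition is invariant under conjugation, so the
  off-diagonal result also applies to (1 + E(p,q)) c (1 - E(p,q)), whose (p,q) entry is
  c_qq - c_pp.
\<close>

lemma mat_mult_entry: "(mat k ** M) $ p $ q = k * M $ p $ q"
  for M :: "'a::semiring_1^'n^'m"
  by (simp add: mat_def matrix_matrix_mult_def if_distrib if_distribR sum.delta cong: if_cong)

lemma matrix_add_rdistrib: "((A::'a::semiring_1^'n^'m) + B) ** C = A ** C + B ** C"
  by (simp add: vec_eq_iff matrix_matrix_mult_def distrib_right sum.distrib)

lemma matrix_diff_ldistrib: "(A::'a::ring_1^'n^'m) ** (B - C) = A ** B - A ** C"
  by (simp add: vec_eq_iff matrix_matrix_mult_def right_diff_distrib sum_subtractf)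

lemma matrix_diff_rdistrib: "((A::'a::ring_1^'n^'m) - B) ** C = A ** C - B ** C"
  by (simp add: vec_eq_iff matrix_matrix_mult_def left_diff_distrib sum_subtractf)

lemma matrix_sum_ldistrib: "(A::'a::semiring_1^'n^'m) ** (\<Sum>z\<in>S. X z) = (\<Sum>z\<in>S. A ** X z)"
  by (simp add: vec_eq_iff matrix_matrix_mult_def sum_distrib_left; subst sum.swap; simp)

lemma matrix_sum_rdistrib: "(\<Sum>z\<in>S. X z) ** (B::'a::semiring_1^'n^'m) = (\<Sum>z\<in>S. X z ** B)"
  by (simp add: vec_eq_iff matrix_matrix_mult_def sum_distrib_right; subst sum.swap; simp)

lemma scalar_mat_commute: "(A::'a::comm_semiring_1^'n^'n) ** mat k = mat k ** A"
  by (simp add: vec_eq_iff mat_mult_entry)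
     (simp add: matrix_matrix_mult_def mat_def if_distrib if_distribR sum.delta' mult.commute cong: if_cong)

section \<open>Matrix units and their products\<close>

definition matrix_unit :: "'n \<Rightarrow> 'n \<Rightarrow> 'a::zero_neq_one^'n^'n" where
  "matrix_unit i j = (\<chi> r s. if r = i \<and> s = j then 1 else 0)"

lemma matrix_unit_entry: "(matrix_unit i j :: 'a::zero_neq_one^'n^'n) $ p $ q = (if p = i \<and> q = j then 1 else 0)"
  by (simp add: matrix_unit_def)

lemma matrix_unit_mult_entry: "(matrix_unit i j ** M) $ p $ q = (if p = i then M $ j $ q else 0)"
  by (simp add: matrix_unit_def matrix_matrix_mult_def if_distrib if_distribR sum.delta cong: if_cong)

lemma mult_matrix_unit_entry: "(M ** matrix_unit i j) $ p $ q = (if q = j then M $ p $ i else (0::'a::semiring_1))"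
  by (simp add: matrix_unit_def matrix_matrix_mult_def if_distrib if_distribR sum.delta' cong: if_cong)

lemma sandwich_entry_expansion:
  fixes L X R :: "'a::comm_semiring_1^'n^'n"
  shows "(L ** X ** R) $ p $ q = (\<Sum>z\<in>UNIV. X $ fst z $ snd z * (L ** matrix_unit (fst z) (snd z) ** R) $ p $ q)"
proof -
  have "(L ** X ** R) $ p $ q = (\<Sum>y\<in>UNIV. \<Sum>x\<in>UNIV. X $ x $ y * (L $ p $ x * R $ y $ q))"
    by (simp add: matrix_matrix_mult_def sum_distrib_left sum_distrib_right mult_ac)
  also have "\<dots> = (\<Sum>z\<in>UNIV. X $ fst z $ snd z * (L $ p $ fst z * R $ snd z $ q))"
    by (subst sum.swap) (simp add: sum.cartesian_product UNIV_Times_UNIV[symmetric] split_def del: UNIV_Times_UNIV)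
  also have "\<dots> = (\<Sum>z\<in>UNIV. X $ fst z $ snd z * (L ** matrix_unit (fst z) (snd z) ** R) $ p $ q)"
    by (simp add: matrix_matrix_mult_def[of _ R] mult_matrix_unit_entry if_distrib if_distribR sum.delta' cong: if_cong)
  finally show ?thesis .
qed

definition unit_chain :: "(nat \<Rightarrow> 'b) \<Rightarrow> (nat \<Rightarrow> 'b) \<Rightarrow> nat \<Rightarrow> nat \<Rightarrow> 'b \<Rightarrow> 'b \<Rightarrow> bool" where
  "unit_chain r s m n p q \<longleftrightarrow>
     r m = p \<and> (\<forall>t. m \<le> t \<and> Suc t < n \<longrightarrow> s t = r (Suc t)) \<and> s (n - 1) = q"

lemma unit_product_entry:
  fixes b :: "nat \<Rightarrow> 'a::semiring_1^'n^'n"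
  assumes "m < n" and "\<forall>t\<in>{m..<n}. b t = matrix_unit (r t) (s t)"
  shows "foldr (\<lambda>t acc. b t ** acc) [m..<n] (mat 1) $ p $ q = (if unit_chain r s m n p q then 1 else 0)"
  using assms
proof (induction "n - m" arbitrary: m p)
  case 0 then show ?case by simp
next
  case (Suc k)
  have upt: "[m..<n] = m # [Suc m..<n]" using Suc.prems(1) by (simp add: upt_conv_Cons)
  show ?case
  proof (cases "Suc m = n")
    case True
    have "unit_chain r s m n p q \<longleftrightarrow> r m = p \<and> s m = q"
      using True unfolding unit_chain_def by auto
    moreover have "b m = matrix_unit (r m) (s m)" using Suc.prems by simp
    ultimately show ?thesis using True by (simp add: upt matrix_unit_entry)
  next
    case False
    then have IH: "foldr (\<lambda>t acc. b t ** acc) [Suc m..<n] (mat 1) $ s m $ q = (if unit_chain r s (Suc m) n (s m) q then 1 else 0)"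
      using Suc by simp
    have "unit_chain r s m n p q \<longleftrightarrow> r m = p \<and> unit_chain r s (Suc m) n (s m) q"
      using False Suc.prems(1) unfolding unit_chain_def by (auto simp: le_Suc_eq) (metis Suc_leI le_neq_implies_less)
    moreover have "b m = matrix_unit (r m) (s m)" using Suc.prems by simp
    ultimately show ?thesis by (simp add: upt matrix_unit_mult_entry IH)
  qed
qed

lemma unit_chain_inj:
  assumes g: "inj_on g A" and "m < n" "p \<in> A" "q \<in> A" and rs: "\<forall>t\<in>{m..<n}. r t \<in> A \<and> s t \<in> A"
  shows "unit_chain (g \<circ> r) (g \<circ> s) m n (g p) (g q) \<longleftrightarrow> unit_chain r s m n p q"
proof -
  have eq: "g u = g v \<longleftrightarrow> u = v" if "u \<in> A" "v \<in> A" for u v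
    using g that by (auto dest: inj_onD)
  have "n - 1 \<in> {m..<n}" using assms(2) by simp
  then show ?thesis using assms(2-4) rs unfolding unit_chain_def by (auto simp: eq)
qed

section \<open>Ordered products with one variable singled out\<close>

lemma foldr_mult_acc:
  "foldr (\<lambda>i acc. b i ** acc) xs M = foldr (\<lambda>i acc. b i ** acc) xs (mat 1) ** (M::'a::semiring_1^'n^'n)"
  by (induction xs) (simp_all add: matrix_mul_assoc)

text \<open>Each variable occurs exactly once in a monomial, so the monomial is of the form
  L X R in the matrix X substituted for variable j.\<close>
lemma ordered_prod_slot:
  fixes a :: "nat \<Rightarrow> 'a::field^'n^'n"
  assumes \<tau>: "\<tau> permutes {0..<d}" and "j < d"
  obtains L R where "\<And>X. ordered_prod d \<tau> (a(j := X)) = L ** X ** R"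
proof -
  define m where "m = inv \<tau> j"
  have m: "m < d" "\<tau> m = j"
    using assms unfolding m_def
    by (metis atLeastLessThan_iff le0 permutes_inv permutes_in_image, metis permutes_inverses(1))
  have other: "\<tau> i \<noteq> j" if "i < d" "i \<noteq> m" for i
    using \<tau> that unfolding m_def by (metis permutes_inverses(2))
  have "[0..<d] = [0..<m] @ [m..<d]" using upt_add_eq_append[of 0 m "d - m"] m(1) by simp
  then have split: "[0..<d] = [0..<m] @ m # [Suc m..<d]" using upt_conv_Cons[OF m(1)] by simp
  define prod where "prod xs = foldr (\<lambda>i acc. a (\<tau> i) ** acc) xs (mat 1)" for xs
  have unchanged: "foldr (\<lambda>i acc. (a(j := X)) (\<tau> i) ** acc) xs M = foldr (\<lambda>i acc. a (\<tau> i) ** acc) xs M"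
    if "\<forall>i\<in>set xs. i < d \<and> i \<noteq> m" for xs M X
    using that other by (induction xs) auto
  have "ordered_prod d \<tau> (a(j := X)) = prod [0..<m] ** X ** prod [Suc m..<d]" for X
  proof -
    have "ordered_prod d \<tau> (a(j := X)) = foldr (\<lambda>i acc. a (\<tau> i) ** acc) [0..<m] (X ** prod [Suc m..<d])"
      unfolding ordered_prod_def split prod_def using m by (simp add: unchanged fun_upd_same del: fun_upd_apply)
    also have "\<dots> = prod [0..<m] ** X ** prod [Suc m..<d]"
      unfolding prod_def by (subst foldr_mult_acc) (simp add: matrix_mul_assoc)
    finally show ?thesis .
  qed
  then show ?thesis using that by blast
qed

lemma ordered_prod_slot_entry:
  fixes a :: "nat \<Rightarrow> 'a::field^'n^'n"
  assumes "\<tau> permutes {0..<d}" and "j < d"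
  shows "ordered_prod d \<tau> (a(j := X)) $ p $ q
    = (\<Sum>z\<in>UNIV. X $ fst z $ snd z * ordered_prod d \<tau> (a(j := matrix_unit (fst z) (snd z))) $ p $ q)"
proof -
  obtain L R where LR: "\<And>X. ordered_prod d \<tau> (a(j := X)) = L ** X ** R"
    using ordered_prod_slot[OF assms] by blast
  show ?thesis unfolding LR by (rule sandwich_entry_expansion)
qed

lemma foldr_conj:
  fixes P Q M :: "'a::semiring_1^'n^'n"
  assumes "Q ** P = mat 1"
  shows "foldr (\<lambda>i acc. (P ** b i ** Q) ** acc) xs (P ** M) = P ** foldr (\<lambda>i acc. b i ** acc) xs M"
proof (induction xs)
  case (Cons i xs)
  have "P ** b i ** Q ** (P ** foldr (\<lambda>i acc. b i ** acc) xs M)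
      = P ** b i ** (Q ** P) ** foldr (\<lambda>i acc. b i ** acc) xs M"
    by (simp add: matrix_mul_assoc)
  then show ?case using Cons assms by (simp add: matrix_mul_assoc)
qed simp

lemma ml_eval_conj:
  fixes a :: "nat \<Rightarrow> 'a::field^'n^'n" and P Q :: "'a^'n^'n"
  assumes PQ: "P ** Q = mat 1" and QP: "Q ** P = mat 1"
  shows "ml_eval d lam (\<lambda>i. P ** a i ** Q) = P ** ml_eval d lam a ** Q"
proof -
  have prod: "ordered_prod d \<sigma> (\<lambda>i. P ** a i ** Q) = P ** ordered_prod d \<sigma> a ** Q" for \<sigma>
  proof -
    have "ordered_prod d \<sigma> (\<lambda>i. P ** a i ** Q)
        = foldr (\<lambda>i acc. (P ** a (\<sigma> i) ** Q) ** acc) [0..<d] (P ** Q)"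
      unfolding ordered_prod_def PQ ..
    also have "\<dots> = P ** foldr (\<lambda>i acc. a (\<sigma> i) ** acc) [0..<d] Q"
      by (rule foldr_conj[OF QP])
    also have "\<dots> = P ** ordered_prod d \<sigma> a ** Q"
      unfolding ordered_prod_def by (subst foldr_mult_acc) (simp add: matrix_mul_assoc)
    finally show ?thesis .
  qed
  have scalar: "mat k ** (P ** X ** Q) = P ** (mat k ** X) ** Q" for k and X :: "'a^'n^'n"
    by (simp only: matrix_mul_assoc scalar_mat_commute[of P])
  show ?thesis
    unfolding ml_eval_def prod scalar by (simp add: matrix_sum_ldistrib matrix_sum_rdistrib)
qed

lemma ml_eval_degree_one: "ml_eval 1 lam a = mat (lam id) ** (a 0 :: 'a::field^'n^'n)"
proof -
  have "{\<sigma>. \<sigma> permutes {0..<1::nat}} = {id}" by auto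
  then show ?thesis by (simp add: ml_eval_def ordered_prod_def)
qed

definition slot_annihilator :: "nat \<Rightarrow> ((nat \<Rightarrow> nat) \<Rightarrow> 'a::field) \<Rightarrow> 'a^'n^'n \<Rightarrow> bool" where
  "slot_annihilator d lam c \<longleftrightarrow> (\<forall>j<d. \<forall>a. ml_eval d lam (a(j := c)) = 0)"

lemma slot_annihilator_conj:
  fixes c P Q :: "'a::field^'n^'n"
  assumes PQ: "P ** Q = mat 1" and QP: "Q ** P = mat 1" and c: "slot_annihilator d lam c"
  shows "slot_annihilator d lam (P ** c ** Q)"
  unfolding slot_annihilator_def
proof (intro allI impI)
  fix j a assume j: "j < d"
  define b where "b = (\<lambda>i. Q ** (a::nat \<Rightarrow> 'a^'n^'n) i ** P)"
  have "(\<lambda>i. P ** (b(j := c)) i ** Q) = a(j := P ** c ** Q)"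
  proof
    fix i
    have "P ** (Q ** a i ** P) ** Q = (P ** Q) ** a i ** (P ** Q)" by (simp add: matrix_mul_assoc)
    then show "P ** (b(j := c)) i ** Q = (a(j := P ** c ** Q)) i" using PQ by (simp add: b_def)
  qed
  then have "ml_eval d lam (a(j := P ** c ** Q)) = P ** ml_eval d lam (b(j := c)) ** Q"
    using ml_eval_conj[OF PQ QP] by metis
  also have "\<dots> = 0" using c j unfolding slot_annihilator_def by (simp add: matrix_mul_assoc)
  finally show "ml_eval d lam (a(j := P ** c ** Q)) = 0" .
qed

section \<open>Rigidity of staircase chains\<close>

text \<open>Indices are natural numbers here; they are
  transported to matrix indices by an enumeration later.\<close>
definition stair_row :: "nat \<Rightarrow> nat \<Rightarrow> nat" where
  "stair_row x k = (if k = 1 then x else k div 2)"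

definition stair_col :: "nat \<Rightarrow> nat \<Rightarrow> nat" where
  "stair_col y k = (if k = 1 then y else Suc k div 2)"

lemma stair_row_eq_0: "k \<noteq> 1 \<Longrightarrow> stair_row x k = 0 \<longleftrightarrow> k = 0"
  by (auto simp: stair_row_def)

lemma stair_row_le_col: "k \<noteq> 1 \<Longrightarrow> stair_row x k \<le> stair_col y k"
  by (simp add: stair_row_def stair_col_def)

text \<open>A chain from 0 to d div 2 built from the staircase units taken in the order of the
  permutation pi (which is inv sigma o tau in the application).  Such a chain forces pi to be
  the identity and the wild unit to be E(0,1).\<close>
locale staircase_walk =
  fixes d x y :: nat and \<pi> :: "nat \<Rightarrow> nat"
  assumes perm: "\<pi> permutes {0..<d}" and two_le: "2 \<le> d"
    and start: "stair_row x (\<pi> 0) = 0"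
    and link: "\<And>t. Suc t < d \<Longrightarrow> stair_col y (\<pi> t) = stair_row x (\<pi> (Suc t))"
    and finish: "stair_col y (\<pi> (d - 1)) = d div 2"
begin

lemma pi_inj: "\<pi> s = \<pi> t \<Longrightarrow> s = t"
  using perm by (meson permutes_inj injD)

lemma time_of_position:
  assumes "k < d" obtains s where "s < d" "\<pi> s = k"
proof -
  obtain s where s: "\<pi> s = k" using perm by (metis permutes_surj surj_def)
  have "s < d"
  proof (rule ccontr)
    assume "\<not> s < d"
    then have "\<pi> s = s" using perm by (simp add: permutes_not_in)
    with s assms \<open>\<not> s < d\<close> show False by simp
  qed
  with s that show ?thesis by blast
qed

lemma row_mono:
  assumes "a \<le> b" "b < d" and no_wild: "\<forall>u. a \<le> u \<and> u < b \<longrightarrow> \<pi> u \<noteq> 1"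
  shows "stair_row x (\<pi> a) \<le> stair_row x (\<pi> b)"
  using assms
proof (induction b)
  case (Suc b)
  show ?case
  proof (cases "a = Suc b")
    case False
    then have ab: "a \<le> b" using Suc.prems by simp
    have "stair_row x (\<pi> a) \<le> stair_row x (\<pi> b)" using Suc.IH[OF ab] Suc.prems by simp
    also have "\<dots> \<le> stair_col y (\<pi> b)" using stair_row_le_col Suc.prems ab by auto
    also have "\<dots> = stair_row x (\<pi> (Suc b))" using link Suc.prems by simp
    finally show ?thesis .
  qed simp
qed simp

text \<open>The chain starts with the loop E(0,0) followed by the wild unit, which must start
  at 0: no ordinary unit leaves level 0.\<close>
lemma first_steps: "\<pi> 0 = 0 \<and> \<pi> 1 = 1 \<and> x = 0"
proof -
  have p0: "\<pi> 0 = 0"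
  proof (rule ccontr)
    assume "\<pi> 0 \<noteq> 0"
    then have p0: "\<pi> 0 = 1" by (metis start stair_row_eq_0)
    obtain s0 where s0: "s0 < d" "\<pi> s0 = 0" using time_of_position two_le by (metis less_le_trans zero_less_numeral)
    have "1 \<le> s0" using s0 p0 by (cases s0) auto
    moreover have "\<forall>u. 1 \<le> u \<and> u < s0 \<longrightarrow> \<pi> u \<noteq> 1" using pi_inj[of _ 0] p0 by auto
    ultimately have "stair_row x (\<pi> 1) \<le> stair_row x (\<pi> s0)" using row_mono s0(1) by blast
    moreover have "\<pi> 1 \<noteq> 1" using pi_inj[of 1 0] p0 by auto
    ultimately have p1: "\<pi> 1 = 0" using s0 stair_row_eq_0 by (simp add: stair_row_def)
    show False
    proof (cases "d = 2")
      case True then show False using finish p1 by (simp add: stair_col_def)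
    next
      case False
      then have "stair_row x (\<pi> 2) = 0" using link[of 1] two_le p1 by (simp add: stair_col_def numeral_2_eq_2)
      moreover have "\<pi> 2 \<noteq> 0" "\<pi> 2 \<noteq> 1" using pi_inj[of 2 1] pi_inj[of 2 0] p0 p1 by auto
      ultimately show False by (metis stair_row_eq_0)
    qed
  qed
  have "stair_row x (\<pi> 1) = 0" using link[of 0] two_le p0 by (simp add: stair_col_def)
  moreover have "\<pi> 1 \<noteq> 0" using pi_inj[of 1 0] p0 by auto
  ultimately have "\<pi> 1 = 1" by (metis stair_row_eq_0)
  with p0 \<open>stair_row x (\<pi> 1) = 0\<close> show ?thesis by (simp add: stair_row_def)
qed

lemma wild_position: "\<pi> u = 1 \<longleftrightarrow> u = 1"
  using first_steps pi_inj[of u 1] by auto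

lemma beyond_first_steps:
  assumes "2 \<le> t" shows "2 \<le> \<pi> t"
proof -
  have "\<pi> t \<noteq> 0" "\<pi> t \<noteq> 1" using assms first_steps pi_inj[of t 0] pi_inj[of t 1] by auto
  then show ?thesis by linarith
qed

text \<open>The wild unit must end at level 1: level 1 is reached by the loop at position 2,
  and the chain never comes back down.\<close>
lemma wild_col: "y = 1"
proof (cases "d = 2")
  case True then show ?thesis using finish first_steps by (simp add: stair_col_def)
next
  case False
  then have d3: "2 < d" using two_le by simp
  then have y: "y = stair_row x (\<pi> 2)"
    using link[of 1] first_steps by (simp add: stair_col_def numeral_2_eq_2)
  have "2 \<le> \<pi> 2" using beyond_first_steps by simp
  then have "1 \<le> y" using y by (auto simp: stair_row_def)
  obtain s2 where s2: "s2 < d" "\<pi> s2 = 2" using time_of_position d3 by blast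
  have "2 \<le> s2" using s2 first_steps by (cases s2; cases "s2 - 1"; auto)
  moreover have "\<forall>u. 2 \<le> u \<and> u < s2 \<longrightarrow> \<pi> u \<noteq> 1" using wild_position by auto
  ultimately have "y \<le> stair_row x 2" using row_mono s2 y by metis
  with \<open>1 \<le> y\<close> show ?thesis by (simp add: stair_row_def)
qed

text \<open>All remaining units are used in increasing order: at each level the loop E(m,m) has
  to be used before the step E(m, m+1) that leaves the level for good.\<close>
lemma identity: "t < d \<Longrightarrow> \<pi> t = t"
proof (induction t rule: less_induct)
  case (less t)
  show ?case
  proof (cases "t < 2")
    case True then show ?thesis using first_steps by (auto simp: less_2_cases_iff)
  next
    case False
    then have t2: "2 \<le> t" by simp
    have fixed: "\<And>u. u < t \<Longrightarrow> \<pi> u = u" using less by simp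
    have "stair_row x (\<pi> t) = stair_col y (t - 1)"
      using link[of "t - 1"] fixed[of "t - 1"] less.prems t2 by simp
    also have "\<dots> = t div 2" using wild_col t2 by (auto simp: stair_col_def)
    finally have row: "\<pi> t div 2 = t div 2"
      using beyond_first_steps[OF t2] by (simp add: stair_row_def)
    have "t \<le> \<pi> t"
    proof (rule ccontr)
      assume "\<not> t \<le> \<pi> t"
      then have "\<pi> (\<pi> t) = \<pi> t" using fixed by simp
      then show False using pi_inj[of "\<pi> t" t] \<open>\<not> t \<le> \<pi> t\<close> by simp
    qed
    show ?thesis
    proof (rule ccontr)
      assume ne: "\<pi> t \<noteq> t"
      then have pt: "\<pi> t = Suc t" using row \<open>t \<le> \<pi> t\<close> by linarith
      obtain s where s: "s < d" "\<pi> s = t" using time_of_position less.prems by blast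
      have "Suc t \<le> s" using fixed[of s] s ne by (metis not_less_eq_eq le_antisym not_le)
      moreover have "\<forall>u. Suc t \<le> u \<and> u < s \<longrightarrow> \<pi> u \<noteq> 1" using t2 wild_position by auto
      ultimately have "stair_row x (\<pi> (Suc t)) \<le> stair_row x (\<pi> s)" using row_mono s(1) by blast
      moreover have "stair_row x (\<pi> (Suc t)) = stair_col y (Suc t)"
        using link[of t] pt \<open>Suc t \<le> s\<close> s(1) by simp
      ultimately show False using s t2 row pt by (simp add: stair_row_def stair_col_def)
    qed
  qed
qed

end

lemma staircase_walk_iff:
  assumes "\<pi> permutes {0..<d}" and "2 \<le> d"
  shows "unit_chain (stair_row x \<circ> \<pi>) (stair_col y \<circ> \<pi>) 0 d 0 (d div 2)
    \<longleftrightarrow> x = 0 \<and> y = 1 \<and> (\<forall>t<d. \<pi> t = t)"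
proof
  assume "unit_chain (stair_row x \<circ> \<pi>) (stair_col y \<circ> \<pi>) 0 d 0 (d div 2)"
  then interpret staircase_walk d x y \<pi>
    using assms by unfold_locales (auto simp: unit_chain_def)
  show "x = 0 \<and> y = 1 \<and> (\<forall>t<d. \<pi> t = t)" using first_steps wild_col identity by blast
next
  assume "x = 0 \<and> y = 1 \<and> (\<forall>t<d. \<pi> t = t)"
  then show "unit_chain (stair_row x \<circ> \<pi>) (stair_col y \<circ> \<pi>) 0 d 0 (d div 2)"
    using assms(2) by (auto simp: unit_chain_def stair_row_def stair_col_def)
qed

definition staircase :: "(nat \<Rightarrow> 'n) \<Rightarrow> (nat \<Rightarrow> nat) \<Rightarrow> nat \<Rightarrow> 'a::field^'n^'n" where
  "staircase g \<sigma> i = matrix_unit (g (inv \<sigma> i div 2)) (g (Suc (inv \<sigma> i) div 2))"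

lemma staircase_factor:
  assumes "\<sigma> permutes {0..<d}"
  shows "((staircase g \<sigma>)(\<sigma> 1 := matrix_unit (g x') (g y'))) (\<tau> t)
    = (matrix_unit (g (stair_row x' (inv \<sigma> (\<tau> t)))) (g (stair_col y' (inv \<sigma> (\<tau> t)))) :: 'a::field^'n^'n)"
proof -
  have "\<tau> t = \<sigma> 1 \<longleftrightarrow> inv \<sigma> (\<tau> t) = 1" using assms by (metis permutes_inverses)
  then show ?thesis by (auto simp: staircase_def stair_row_def stair_col_def)
qed

lemma permutes_eq_iff_inv_comp:
  assumes \<sigma>: "\<sigma> permutes {0..<d}" and \<tau>: "\<tau> permutes {0..<d}"
  shows "(\<forall>t<d. inv \<sigma> (\<tau> t) = t) \<longleftrightarrow> \<tau> = \<sigma>"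
proof
  assume id: "\<forall>t<d. inv \<sigma> (\<tau> t) = t"
  show "\<tau> = \<sigma>"
  proof
    fix t show "\<tau> t = \<sigma> t"
    proof (cases "t < d")
      case True
      then show ?thesis using id \<sigma> by (metis permutes_inverses(1))
    qed (use \<sigma> \<tau> in \<open>simp add: permutes_not_in\<close>)
  qed
qed (use \<sigma> in \<open>simp add: permutes_inverses(2)\<close>)

text \<open>The hypothesis d < 2n guarantees that all staircase indices are below n.\<close>
lemma staircase_entry:
  fixes g :: "nat \<Rightarrow> 'n::finite"
  assumes \<sigma>: "\<sigma> permutes {0..<d}" and \<tau>: "\<tau> permutes {0..<d}"
    and d2: "2 \<le> d" and dn: "d < 2 * CARD('n)" and g: "bij_betw g {..<CARD('n)} UNIV"
  shows "ordered_prod d \<tau> ((staircase g \<sigma>)(\<sigma> 1 := matrix_unit x y)) $ g 0 $ g (d div 2)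
    = (if \<tau> = \<sigma> \<and> x = g 0 \<and> y = g 1 then (1::'a::field) else 0)"
proof -
  have onto: "z \<in> g ` {..<CARD('n)}" for z using bij_betw_imp_surj_on[OF g] by simp
  obtain x' y' where x': "x' < CARD('n)" "g x' = x" and y': "y' < CARD('n)" "g y' = y"
    using onto[of x] onto[of y] by auto
  define \<pi> where "\<pi> = inv \<sigma> \<circ> \<tau>"
  have \<pi>: "\<pi> permutes {0..<d}" unfolding \<pi>_def using \<sigma> \<tau> by (simp add: permutes_compose permutes_inv)
  have factors: "\<forall>t\<in>{0..<d}. ((staircase g \<sigma>)(\<sigma> 1 := matrix_unit x y)) (\<tau> t)
      = matrix_unit ((g \<circ> (stair_row x' \<circ> \<pi>)) t) ((g \<circ> (stair_col y' \<circ> \<pi>)) t)"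
  proof
    fix t
    show "((staircase g \<sigma>)(\<sigma> 1 := matrix_unit x y)) (\<tau> t)
      = matrix_unit ((g \<circ> (stair_row x' \<circ> \<pi>)) t) ((g \<circ> (stair_col y' \<circ> \<pi>)) t)"
      unfolding x'(2)[symmetric] y'(2)[symmetric] \<pi>_def comp_def by (rule staircase_factor[OF \<sigma>])
  qed
  have bounded: "\<forall>t\<in>{0..<d}. stair_row x' (\<pi> t) \<in> {..<CARD('n)} \<and> stair_col y' (\<pi> t) \<in> {..<CARD('n)}"
  proof
    fix t assume "t \<in> {0..<d}"
    then have "\<pi> t < d" using permutes_in_image[OF \<pi>, of t] by simp
    then show "stair_row x' (\<pi> t) \<in> {..<CARD('n)} \<and> stair_col y' (\<pi> t) \<in> {..<CARD('n)}"
      using x' y' dn by (auto simp: stair_row_def stair_col_def)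
  qed
  have "ordered_prod d \<tau> ((staircase g \<sigma>)(\<sigma> 1 := matrix_unit x y)) $ g 0 $ g (d div 2)
      = (if unit_chain (g \<circ> (stair_row x' \<circ> \<pi>)) (g \<circ> (stair_col y' \<circ> \<pi>)) 0 d (g 0) (g (d div 2)) then 1 else 0)"
    unfolding ordered_prod_def using d2 by (intro unit_product_entry[OF _ factors]) simp
  also have "\<dots> = (if unit_chain (stair_row x' \<circ> \<pi>) (stair_col y' \<circ> \<pi>) 0 d 0 (d div 2) then 1 else 0)"
    using unit_chain_inj[OF bij_betw_imp_inj_on[OF g]] bounded d2 dn by simp
  also have "\<dots> = (if x' = 0 \<and> y' = 1 \<and> (\<forall>t<d. \<pi> t = t) then 1 else 0)"
    using staircase_walk_iff[OF \<pi> d2] by simp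
  also have "\<dots> = (if \<tau> = \<sigma> \<and> x = g 0 \<and> y = g 1 then 1 else 0)"
  proof -
    have "x = g 0 \<longleftrightarrow> x' = 0" "y = g 1 \<longleftrightarrow> y' = 1"
      using x' y' d2 dn bij_betw_imp_inj_on[OF g] by (auto dest: inj_onD)
    then show ?thesis using permutes_eq_iff_inv_comp[OF \<sigma> \<tau>] by (simp add: \<pi>_def)
  qed
  finally show ?thesis .
qed

section \<open>Annihilating matrices are scalar\<close>

lemma annihilator_staircase_entry:
  fixes c :: "'a::field^'n^'n" and g :: "nat \<Rightarrow> 'n"
  assumes c: "slot_annihilator d lam c" and \<sigma>: "\<sigma> permutes {0..<d}" and "lam \<sigma> \<noteq> 0"
    and d2: "2 \<le> d" and dn: "d < 2 * CARD('n)" and g: "bij_betw g {..<CARD('n)} UNIV"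
  shows "c $ g 0 $ g 1 = 0"
proof -
  define a :: "nat \<Rightarrow> 'a^'n^'n" where "a = staircase g \<sigma>"
  define j where "j = \<sigma> 1"
  have j: "j < d" unfolding j_def using permutes_in_image[OF \<sigma>, of 1] d2 by simp
  have summand: "ordered_prod d \<tau> (a(j := c)) $ g 0 $ g (d div 2) = (if \<tau> = \<sigma> then c $ g 0 $ g 1 else 0)"
    if \<tau>: "\<tau> permutes {0..<d}" for \<tau>
  proof -
    have "ordered_prod d \<tau> (a(j := c)) $ g 0 $ g (d div 2)
        = (\<Sum>z\<in>UNIV. c $ fst z $ snd z * ordered_prod d \<tau> (a(j := matrix_unit (fst z) (snd z))) $ g 0 $ g (d div 2))"
      by (rule ordered_prod_slot_entry[OF \<tau> j])
    also have "\<dots> = (\<Sum>z\<in>UNIV. c $ fst z $ snd z * (if \<tau> = \<sigma> \<and> fst z = g 0 \<and> snd z = g 1 then 1 else 0))"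
      unfolding a_def j_def staircase_entry[OF \<sigma> \<tau> d2 dn g] ..
    also have "\<dots> = (\<Sum>z\<in>UNIV. if z = (g 0, g 1) then (if \<tau> = \<sigma> then c $ g 0 $ g 1 else 0) else 0)"
      by (rule sum.cong) auto
    finally show ?thesis by simp
  qed
  have "0 = ml_eval d lam (a(j := c)) $ g 0 $ g (d div 2)"
    using c j unfolding slot_annihilator_def by simp
  also have "\<dots> = (\<Sum>\<tau>\<in>{\<tau>. \<tau> permutes {0..<d}}. lam \<tau> * ordered_prod d \<tau> (a(j := c)) $ g 0 $ g (d div 2))"
    unfolding ml_eval_def by (simp add: mat_mult_entry)
  also have "\<dots> = (\<Sum>\<tau>\<in>{\<tau>. \<tau> permutes {0..<d}}. if \<tau> = \<sigma> then lam \<sigma> * c $ g 0 $ g 1 else 0)"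
    by (rule sum.cong) (auto simp: summand)
  also have "\<dots> = lam \<sigma> * c $ g 0 $ g 1"
    using \<sigma> finite_permutations[of "{0..<d}"] by simp
  finally show ?thesis using assms(3) by simp
qed

lemma enumeration_starting_with:
  fixes p q :: "'n::finite"
  assumes "p \<noteq> q"
  obtains g where "bij_betw g {..<CARD('n)} UNIV" "g 0 = p" "g 1 = q"
proof -
  obtain xs :: "'n list" where xs: "set xs = UNIV - {p, q}" "distinct xs"
    using finite_distinct_list[of "UNIV - {p, q}"] by auto
  define ys where "ys = p # q # xs"
  have "distinct ys" "set ys = UNIV" using xs assms unfolding ys_def by auto
  then have "length ys = CARD('n)" by (metis distinct_card)
  then have "bij_betw (nth ys) {..<CARD('n)} UNIV"
    using bij_betw_nth \<open>distinct ys\<close> \<open>set ys = UNIV\<close> by metis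
  then show ?thesis using that unfolding ys_def by simp
qed

lemma annihilator_offdiag:
  fixes c :: "'a::field^'n^'n"
  assumes "slot_annihilator d lam c" "ml_nonzero d lam" "2 \<le> d" "d < 2 * CARD('n)" "p \<noteq> q"
  shows "c $ p $ q = 0"
proof -
  obtain \<sigma> where "\<sigma> permutes {0..<d}" "lam \<sigma> \<noteq> 0" using assms(2) unfolding ml_nonzero_def by blast
  moreover obtain g where "bij_betw g {..<CARD('n)} UNIV" "g 0 = p" "g 1 = q"
    using enumeration_starting_with assms(5) by blast
  ultimately show ?thesis using annihilator_staircase_entry assms(1,3,4) by metis
qed

text \<open>Conjugation by 1 + E(p,q), whose inverse is 1 - E(p,q), turns the difference of the
  diagonal entries at p and q into an off-diagonal entry.\<close>
lemma annihilator_diag: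
  fixes c :: "'a::field^'n^'n"
  assumes c: "slot_annihilator d lam c" and "ml_nonzero d lam" "2 \<le> d" "d < 2 * CARD('n)" and pq: "p \<noteq> q"
  shows "c $ p $ p = c $ q $ q"
proof -
  define E :: "'a^'n^'n" where "E = matrix_unit p q"
  have EE: "E ** E = 0" using pq by (simp add: vec_eq_iff E_def matrix_unit_mult_entry matrix_unit_entry)
  have inv1: "(mat 1 + E) ** (mat 1 - E) = mat 1" by (simp add: matrix_add_rdistrib matrix_diff_ldistrib EE)
  have inv2: "(mat 1 - E) ** (mat 1 + E) = mat 1" by (simp add: matrix_diff_rdistrib matrix_add_ldistrib EE)
  have "slot_annihilator d lam ((mat 1 + E) ** c ** (mat 1 - E))"
    by (rule slot_annihilator_conj[OF inv1 inv2 c])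
  then have "((mat 1 + E) ** c ** (mat 1 - E)) $ p $ q = 0"
    using annihilator_offdiag assms(2-4) pq by blast
  moreover have "(mat 1 + E) ** c ** (mat 1 - E) = (c + E ** c) - (c + E ** c) ** E"
    by (simp add: matrix_add_rdistrib matrix_diff_ldistrib)
  moreover have "c $ p $ q = 0" "c $ q $ p = 0" using annihilator_offdiag[OF c assms(2-4)] pq by auto
  ultimately show ?thesis using pq by (simp add: E_def matrix_unit_mult_entry mult_matrix_unit_entry)
qed

lemma annihilator_degree_one:
  fixes c :: "'a::field^'n^'n"
  assumes "slot_annihilator 1 lam c" and "ml_nonzero 1 lam"
  shows "c = 0"
proof -
  have "lam id \<noteq> 0" using assms(2) unfolding ml_nonzero_def by auto
  moreover have "mat (lam id) ** c = 0"
    using assms(1) ml_eval_degree_one[of lam "(\<lambda>_. c)(0 := c)"] unfolding slot_annihilator_def by auto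
  ultimately show ?thesis by (simp add: vec_eq_iff) (metis mat_mult_entry zero_index mult_eq_0_iff)
qed

lemma scalar_matrixI:
  fixes c :: "'a::zero^'n^'n"
  assumes "\<And>p q. p \<noteq> q \<Longrightarrow> c $ p $ q = 0" and "\<And>p q. c $ p $ p = c $ q $ q"
  shows "\<exists>k. c = mat k"
proof
  show "c = mat (c $ r $ r)" for r using assms by (auto simp: vec_eq_iff mat_def)
qed

theorem lemma2p3:
  fixes lam :: "(nat \<Rightarrow> nat) \<Rightarrow> 'a::field"
    and d :: nat
    and c :: "'a^'n^'n"
  assumes "ml_nonzero d lam"
    and "d \<ge> 1"
    and "CARD('n) \<ge> 2"
    and "d < 2 * CARD('n)"
    and "\<forall>j<d. \<forall>a :: nat \<Rightarrow> 'a^'n^'n. ml_eval d lam (a(j := c)) = 0"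
  shows "\<exists>k::'a. c = mat k"
proof -
  have c: "slot_annihilator d lam c" using assms(5) unfolding slot_annihilator_def by blast
  show ?thesis
  proof (cases "d = 1")
    case True
    then have "c = mat 0" using annihilator_degree_one c assms(1) by simp
    then show ?thesis ..
  next
    case False
    then have d2: "2 \<le> d" using assms(2) by simp
    show ?thesis
    proof (rule scalar_matrixI)
      show "c $ p $ q = 0" if "p \<noteq> q" for p q using annihilator_offdiag c assms(1,4) d2 that by blast
      show "c $ p $ p = c $ q $ q" for p q using annihilator_diag c assms(1,4) d2 by (cases "p = q") blast+
    qed
  qed
qed

end
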